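(* Let $f:\mathbb N\to(0,\infty)$ with $f(n)\to\infty$. There exists a critical offspring distribution $\mu$ such that \[ \limsup_{n\to\infty}\mathbf P\Big(\Delta(\mathrm T_n(\mu))>\frac{n}{f(n)}\Big)=1, \] where the limit superior runs over all $n$ with $\mathbf P(|\mathrm T(\mu)|=n)>0$.
   Context: An offspring distribution is a probability measure $\mu=(\mu_k)_{k\ge0}$ on $\mathbb Z_+$; it is critical if $\sum_kk\mu_k=1$. $\mathrm T(\mu)$ is a $\mu$-Bienaymé (Galton–Watson) tree and $\mathrm T_n(\mu)$ is $\mathrm T(\mu)$ conditioned to have exactly $n$ vertices. For a tree $\mathrm t$, $\Delta(\mathrm t)$ is the maximal number of children of a vertex of $\mathrm t$. *)

theory Defs
  imports Complex_Main
begin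

datatype ptree = Node "ptree list"

fun tsize :: "ptree \<Rightarrow> nat" where
  "tsize (Node ts) = Suc (sum_list (map tsize ts))"

fun maxdeg :: "ptree \<Rightarrow> nat" where
  "maxdeg (Node ts) = fold max (map maxdeg ts) (length ts)"

text \<open>Probability that a mu-Bienayme tree equals the plane tree t:
  the product over vertices of mu(number of children).\<close>
fun gw_weight :: "(nat \<Rightarrow> real) \<Rightarrow> ptree \<Rightarrow> real" where
  "gw_weight mu (Node ts) = mu (length ts) * prod_list (map (gw_weight mu) ts)"

definition offspring_distr :: "(nat \<Rightarrow> real) \<Rightarrow> bool" where
  "offspring_distr mu \<longleftrightarrow> (\<forall>k. 0 \<le> mu k) \<and> mu sums 1"

definition critical :: "(nat \<Rightarrow> real) \<Rightarrow> bool" where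
  "critical mu \<longleftrightarrow> offspring_distr mu \<and> (\<lambda>k. real k * mu k) sums 1"

definition size_prob :: "(nat \<Rightarrow> real) \<Rightarrow> nat \<Rightarrow> real" where
  "size_prob mu n = (\<Sum>t\<in>{t. tsize t = n}. gw_weight mu t)"

text \<open>P(P(T_n(mu))), for T_n(mu) = T(mu) conditioned on |T(mu)| = n.\<close>
definition cond_prob :: "(nat \<Rightarrow> real) \<Rightarrow> nat \<Rightarrow> (ptree \<Rightarrow> bool) \<Rightarrow> real" where
  "cond_prob mu n P =
     (\<Sum>t\<in>{t. tsize t = n \<and> P t}. gw_weight mu t) / size_prob mu n"

end

theory Submission
  imports Defs
begin

(* The distribution puts mass 2^-i / k_i on a sparse sequence of degrees k_1 < k_2 < ...
   and the remaining mass on 0, so its mean is the sum of the 2^-i, i.e. 1. Truncated below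
   K = k_(j+1) it has mean 1 - 2^-j but loses almost no mass; hence a forest of K trees of
   degrees below K is finite and of total size at most T = K 2^(j+1) with probability at least
   e^-4/3. Hanging such a forest below a root of degree K gives high-degree trees of sizes in
   [K, T + 1] with total mass at least mu(K) e^-4/3. An exponential tilt bounds the mass of
   trees of size n with all degrees below K by e^theta psi^n with psi < 1, where theta and psi
   depend only on k_1, ..., k_j; choosing k_(j+1) large makes the sum of these bounds over
   n >= K a small fraction of mu(K) e^-4/3. So for some n in [K, T + 1] the trees with a vertex
   of degree at least K dominate, and there n / f(n) < K once f > 2 + 2^(j+1) beyond K. *)

lemma sum_Markov:
  fixes p s :: "'a \<Rightarrow> real"
  assumes "finite A" and "\<And>x. x \<in> A \<Longrightarrow> 0 \<le> p x" and "\<And>x. x \<in> A \<Longrightarrow> 0 \<le> s x" and "0 < T"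
  shows "(\<Sum>x\<in>{x\<in>A. T < s x}. p x) \<le> (\<Sum>x\<in>A. s x * p x) / T"
proof -
  have "(\<Sum>x\<in>{x\<in>A. T < s x}. p x) \<le> (\<Sum>x\<in>{x\<in>A. T < s x}. s x / T * p x)"
  proof (rule sum_mono)
    fix x assume "x \<in> {x\<in>A. T < s x}"
    then have "1 \<le> s x / T" "0 \<le> p x" using assms by auto
    then show "p x \<le> s x / T * p x" using mult_right_mono[of 1 "s x / T" "p x"] by simp
  qed
  also have "\<dots> \<le> (\<Sum>x\<in>A. s x / T * p x)"
    using assms by (intro sum_mono2) auto
  finally show ?thesis by (simp add: sum_divide_distrib)
qed

lemma exists_le_mult_of_sum_le:
  fixes a b :: "'i \<Rightarrow> real"
  assumes "finite R" and "\<And>n. n \<in> R \<Longrightarrow> 0 \<le> a n" and "\<And>n. n \<in> R \<Longrightarrow> 0 \<le> b n"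
    and "0 < sum a R" and "sum b R \<le> eps * sum a R"
  shows "\<exists>n\<in>R. 0 < a n \<and> b n \<le> eps * a n"
proof (rule ccontr)
  assume contra: "\<not> ?thesis"
  have less: "eps * a n < b n" if "n \<in> R" "0 < a n" for n
    using contra that by auto
  have le: "eps * a n \<le> b n" if "n \<in> R" for n
  proof (cases "0 < a n")
    case False
    with assms(2)[OF that] have "a n = 0" by simp
    with assms(3)[OF that] show ?thesis by simp
  qed (use less[OF that] in simp)
  obtain n where "n \<in> R" "0 < a n"
    using assms(4) sum_nonpos[of R a] by (force simp: not_le)
  then have "(\<Sum>n\<in>R. eps * a n) < sum b R"
    by (intro sum_strict_mono_ex1[OF assms(1)]) (use le less in auto)
  with assms(5) show False by (simp add: sum_distrib_left)
qed

lemma power_diff_le_mult_diff: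
  fixes s t :: real
  assumes "0 \<le> s" "s \<le> t" "t \<le> 1"
  shows "t ^ d - s ^ d \<le> real d * (t - s)"
proof (induction d)
  case (Suc d)
  have "t ^ Suc d - s ^ Suc d = t * (t ^ d - s ^ d) + s ^ d * (t - s)"
    by (simp add: algebra_simps)
  also have "\<dots> \<le> 1 * (real d * (t - s)) + 1 * (t - s)"
    using assms Suc power_mono[of s t d] by (intro add_mono mult_mono) (auto simp: power_le_one)
  finally show ?case by (simp add: algebra_simps)
qed simp

lemma exp_neg4_le_power:
  assumes "4 \<le> K"
  shows "exp (-4) \<le> (1 - 2 / real K) ^ K"
proof -
  define x where "x = 2 / real K"
  have x: "0 \<le> x" "x \<le> 1/2" and Kx: "real K * x = 2"
    using assms by (auto simp: x_def)
  have "- x - 2 * x\<^sup>2 \<le> ln (1 - x)"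
    by (rule ln_one_minus_pos_lower_bound[OF x])
  moreover have "2 * x\<^sup>2 \<le> x"
    using mult_right_mono[of "2 * x" 1 x] x by (simp add: power2_eq_square mult.assoc)
  ultimately have "real K * (-2 * x) \<le> real K * ln (1 - x)"
    by (intro mult_left_mono) auto
  then have "exp (-4) \<le> exp (real K * ln (1 - x))"
    using Kx by (simp add: algebra_simps)
  also have "\<dots> = (1 - x) ^ K"
    using x by (simp add: exp_of_nat_mult)
  finally show ?thesis unfolding x_def .
qed

lemma sum_power_le_geometric:
  fixes x :: real
  assumes "0 \<le> x" "x < 1"
  shows "(\<Sum>i=m..n. x ^ i) \<le> x ^ m / (1 - x)"
  using assms by (auto simp: sum_gp divide_right_mono)

lemma ratio_power_mono:
  fixes x y :: real
  assumes "0 \<le> x" "x \<le> y" "y < 1"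
  shows "x ^ K / (1 - x) \<le> y ^ K / (1 - y)"
  using assms by (intro frac_le power_mono) auto

lemma sum_Suc_shift_lessThan: "(\<Sum>i\<in>{1..<Suc j}. F i) = (\<Sum>i<j. F (Suc i))"
  by (simp only: One_nat_def sum.shift_bounds_Suc_ivl atLeast0LessThan)

lemma sum_half_powers: "(\<Sum>i\<in>{1..<Suc j}. (1 / 2 :: real) ^ i) = 1 - (1 / 2) ^ j"
proof (induction j)
  case (Suc j)
  have "{1..<Suc (Suc j)} = insert (Suc j) {1..<Suc j}" by auto
  with Suc show ?case by simp
qed simp

lemma half_powers_Suc_sums: "(\<lambda>n. (1 / 2 :: real) ^ Suc n) sums 1"
  using sums_mult[OF geometric_sums[of "1 / 2 :: real"], of "1 / 2"] by simp

lemma eventually_power_div_le: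
  fixes a c r :: real
  assumes "0 < a" "0 \<le> r" "r < 1" "0 < c"
  shows "eventually (\<lambda>K. a * r ^ K / (1 - r) \<le> c / real K) sequentially"
proof -
  have "(\<lambda>K. real K * r ^ K) \<longlonglongrightarrow> 0"
    using assms by (intro powser_times_n_limit_0) simp
  moreover have "0 < c * (1 - r) / a" using assms by simp
  ultimately have "eventually (\<lambda>K. real K * r ^ K < c * (1 - r) / a) sequentially"
    by (rule order_tendstoD(2))
  moreover have "eventually (\<lambda>K. 0 < K) sequentially" by simp
  ultimately show ?thesis
  proof eventually_elim
    case (elim K)
    then have "0 < real K" by simp
    have "a * r ^ K / (1 - r) = a * (real K * r ^ K) / (1 - r) / real K"
      using \<open>0 < real K\<close> by simp
    also have "\<dots> \<le> a * (c * (1 - r) / a) / (1 - r) / real K"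
      using elim assms \<open>0 < real K\<close> by (intro divide_right_mono mult_left_mono) auto
    also have "\<dots> = c / real K"
      using assms by simp
    finally show ?case .
  qed
qed

section \<open>Degree sequences of forests\<close>

text \<open>The Lukasiewicz word of a forest: the numbers of children of its vertices in depth-first
  order. It determines the forest.\<close>

fun preorder_degrees :: "ptree list \<Rightarrow> nat list" where
  "preorder_degrees [] = []"
| "preorder_degrees (Node cs # ts) = length cs # preorder_degrees (cs @ ts)"

lemma inj_Node: "inj Node"
  by (rule injI) simp

lemma tsize_ge_1: "1 \<le> tsize t"
  by (cases t) auto

lemma length_le_sum_tsize: "length ts \<le> sum_list (map tsize ts)"
proof (induction ts)
  case (Cons t ts)
  then show ?case using tsize_ge_1[of t] by simp
qed simp

lemma real_sum_list_tsize: "real (sum_list (map tsize ts)) = sum_list (map (\<lambda>t. real (tsize t)) ts)"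
  by (simp add: sum_list_of_nat[symmetric] o_def)

lemma length_preorder_degrees: "length (preorder_degrees ts) = sum_list (map tsize ts)"
  by (induction ts rule: preorder_degrees.induct) auto

lemma sum_list_preorder_degrees:
  "sum_list (preorder_degrees ts) + length ts = length (preorder_degrees ts)"
  by (induction ts rule: preorder_degrees.induct) auto

lemma prod_list_preorder_degrees:
  "prod_list (map mu (preorder_degrees ts)) = prod_list (map (gw_weight mu) ts)"
  by (induction ts rule: preorder_degrees.induct) (auto simp: mult.assoc)

lemma preorder_degrees_append_eq:
  assumes "preorder_degrees ts @ xs = preorder_degrees us @ ys" and "length ts = length us"
  shows "ts = us \<and> xs = ys"
  using assms
proof (induction ts arbitrary: us rule: preorder_degrees.induct)
  case (2 cs ts)
  then obtain cs' us' where us: "us = Node cs' # us'"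
    by (metis length_Suc_conv ptree.exhaust)
  with "2.prems" have "length cs = length cs'"
    and "preorder_degrees (cs @ ts) @ xs = preorder_degrees (cs' @ us') @ ys" by auto
  with "2.IH"[of "cs' @ us'"] "2.prems"(2) us show ?case by auto
qed simp

lemma inj_preorder_degrees: "inj (\<lambda>t. preorder_degrees [t])"
  by (rule injI) (use preorder_degrees_append_eq[of "[_]" "[]" "[_]" "[]"] in simp)

lemma preorder_degrees_less_length:
  "x \<in> set (preorder_degrees ts) \<Longrightarrow> x < length (preorder_degrees ts)"
proof (induction ts rule: preorder_degrees.induct)
  case (2 cs ts)
  then show ?case
    using sum_list_preorder_degrees[of "cs @ ts"] by auto
qed simp

lemma fold_max_less_iff: "fold max xs (a::nat) < K \<longleftrightarrow> a < K \<and> (\<forall>x\<in>set xs. x < K)"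
  by (induction xs arbitrary: a) auto

lemma length_le_maxdeg: "length ts \<le> maxdeg (Node ts)"
proof -
  have "(a::nat) \<le> fold max xs a" for a xs
    by (induction xs arbitrary: a) (auto intro: le_trans[OF max.cobounded2])
  then show ?thesis by simp
qed

lemma preorder_degrees_less_maxdeg:
  "\<forall>t\<in>set ts. maxdeg t < K \<Longrightarrow> \<forall>x\<in>set (preorder_degrees ts). x < K"
  by (induction ts rule: preorder_degrees.induct) (auto simp: fold_max_less_iff)

lemma finite_tsize_eq: "finite {t. tsize t = n}"
proof -
  have "(\<lambda>t. preorder_degrees [t]) ` {t. tsize t = n} \<subseteq> {xs. set xs \<subseteq> {..<n} \<and> length xs = n}"
    using preorder_degrees_less_length[of _ "[_]"] by (auto simp: length_preorder_degrees)
  then have "finite ((\<lambda>t. preorder_degrees [t]) ` {t. tsize t = n})"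
    by (rule finite_subset) (simp add: finite_lists_length_eq)
  then show ?thesis
    using finite_imageD inj_preorder_degrees inj_on_subset by blast
qed

lemma gw_weight_nonneg: "(\<And>d. 0 \<le> mu d) \<Longrightarrow> 0 \<le> gw_weight mu t"
  by (induction t) (auto intro!: mult_nonneg_nonneg prod_list_nonneg)

abbreviation lists_of_length :: "'a set \<Rightarrow> nat \<Rightarrow> 'a list set" where
  "lists_of_length A d \<equiv> {l. length l = d \<and> set l \<subseteq> A}"

lemma finite_lists_of_length: "finite A \<Longrightarrow> finite (lists_of_length A d)"
  using finite_lists_length_eq[of A d] by (simp add: conj_commute)

lemma lists_of_length_0: "lists_of_length A 0 = {[]}"
  by auto

lemma lists_of_length_Suc: "lists_of_length A (Suc d) = (\<lambda>(x, l). x # l) ` (A \<times> lists_of_length A d)"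
  by (auto simp: length_Suc_conv image_iff)

lemma sum_lists_of_length_Suc:
  assumes "finite A"
  shows "(\<Sum>l\<in>lists_of_length A (Suc d). F l) = (\<Sum>x\<in>A. \<Sum>l\<in>lists_of_length A d. F (x # l))"
proof -
  have "inj_on (\<lambda>(x, l). x # l) (A \<times> lists_of_length A d)"
    by (rule inj_onI) auto
  then show ?thesis
    unfolding lists_of_length_Suc
    by (simp add: sum.reindex sum.cartesian_product split_def)
qed

lemma sum_prod_list_lists_of_length:
  fixes w :: "'a \<Rightarrow> 'b :: comm_semiring_1"
  assumes "finite A"
  shows "(\<Sum>l\<in>lists_of_length A d. prod_list (map w l)) = sum w A ^ d"
proof (induction d)
  case 0
  then show ?case unfolding lists_of_length_0 by simp
next
  case (Suc d)
  then show ?case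
    by (simp add: sum_lists_of_length_Suc[OF assms] sum_distrib_left[symmetric] sum_distrib_right[symmetric])
qed

lemma sum_sum_list_prod_list_lists_of_length:
  fixes w g :: "'a \<Rightarrow> 'b :: comm_semiring_1"
  assumes "finite A"
  shows "(\<Sum>l\<in>lists_of_length A d. sum_list (map g l) * prod_list (map w l))
    = of_nat d * sum w A ^ (d - 1) * (\<Sum>x\<in>A. g x * w x)"
proof (induction d)
  case 0
  then show ?case unfolding lists_of_length_0 by simp
next
  case (Suc d)
  have "(\<Sum>l\<in>lists_of_length A (Suc d). sum_list (map g l) * prod_list (map w l))
      = (\<Sum>x\<in>A. g x * w x) * sum w A ^ d + sum w A * (of_nat d * sum w A ^ (d - 1) * (\<Sum>x\<in>A. g x * w x))"
    by (simp add: sum_lists_of_length_Suc[OF assms] algebra_simps sum.distrib sum_distrib_left[symmetric]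
        sum_distrib_right[symmetric] sum_prod_list_lists_of_length[OF assms] Suc)
      (simp add: sum_distrib_left mult_ac)
  also have "\<dots> = of_nat (Suc d) * sum w A ^ (Suc d - 1) * (\<Sum>x\<in>A. g x * w x)"
    by (cases d) (auto simp: algebra_simps)
  finally show ?case .
qed

section \<open>Masses of events among trees of a given size\<close>

definition event_mass :: "(nat \<Rightarrow> real) \<Rightarrow> nat \<Rightarrow> (ptree \<Rightarrow> bool) \<Rightarrow> real" where
  "event_mass mu n P = (\<Sum>t\<in>{t. tsize t = n \<and> P t}. gw_weight mu t)"

lemma finite_tsize_eq_and: "finite {t. tsize t = n \<and> P t}"
  by (rule finite_subset[OF _ finite_tsize_eq[of n]]) auto

lemma event_mass_nonneg: "(\<And>d. 0 \<le> mu d) \<Longrightarrow> 0 \<le> event_mass mu n P"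
  unfolding event_mass_def by (auto intro!: sum_nonneg gw_weight_nonneg)

lemma event_mass_mono:
  assumes "\<And>d. 0 \<le> mu d" and "\<And>t. tsize t = n \<Longrightarrow> P t \<Longrightarrow> Q t"
  shows "event_mass mu n P \<le> event_mass mu n Q"
  unfolding event_mass_def
  by (rule sum_mono2[OF finite_tsize_eq_and]) (auto intro: assms gw_weight_nonneg)

lemma size_prob_eq_event_mass:
  "size_prob mu n = event_mass mu n P + event_mass mu n (\<lambda>t. \<not> P t)"
proof -
  have "{t. tsize t = n} = {t. tsize t = n \<and> P t} \<union> {t. tsize t = n \<and> \<not> P t}" by auto
  then show ?thesis
    unfolding size_prob_def event_mass_def
    by (simp only:) (rule sum.union_disjoint; auto simp: finite_tsize_eq_and)
qed

lemma cond_prob_gt_one_minus: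
  assumes nonneg: "\<And>d. 0 \<le> mu d" and eps: "0 < eps"
    and PQ: "\<And>t. tsize t = n \<Longrightarrow> P t \<Longrightarrow> Q t"
    and pos: "0 < event_mass mu n P"
    and ratio: "event_mass mu n (\<lambda>t. \<not> P t) \<le> eps * event_mass mu n P"
  shows "0 < size_prob mu n \<and> 1 - eps < cond_prob mu n Q"
proof -
  define a where "a = event_mass mu n P"
  define b where "b = event_mass mu n (\<lambda>t. \<not> P t)"
  have size: "size_prob mu n = a + b"
    unfolding a_def b_def by (rule size_prob_eq_event_mass)
  have "0 \<le> b" unfolding b_def by (rule event_mass_nonneg[OF nonneg])
  with pos have "0 < a + b" unfolding a_def by linarith
  have "1 - eps < 1 / (1 + eps)"
    using eps by (simp add: field_simps)
  also have "\<dots> = a / ((1 + eps) * a)"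
    using pos unfolding a_def by simp
  also have "\<dots> \<le> a / (a + b)"
  proof (rule divide_left_mono)
    show "a + b \<le> (1 + eps) * a" using ratio unfolding a_def b_def by (simp add: algebra_simps)
    show "0 \<le> a" using pos unfolding a_def by simp
    show "0 < (1 + eps) * a * (a + b)" using \<open>0 < a + b\<close> pos eps unfolding a_def by simp
  qed
  also have "\<dots> \<le> event_mass mu n Q / (a + b)"
    using \<open>0 < a + b\<close> event_mass_mono[OF nonneg PQ] unfolding a_def by (intro divide_right_mono) auto
  finally show ?thesis
    using \<open>0 < a + b\<close> unfolding cond_prob_def size event_mass_def by simp
qed

lemma prod_list_tilted:
  "prod_list (map (\<lambda>d. mu d * exp (\<theta> * (real d - 1))) l)
    = prod_list (map mu l) * exp (\<theta> * (real (sum_list l) - real (length l)))"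
proof (induction l)
  case (Cons a l)
  have "\<theta> * (real a - 1) + \<theta> * (real (sum_list l) - real (length l))
      = \<theta> * (real (sum_list (a # l)) - real (length (a # l)))"
    by (simp add: algebra_simps)
  then have "exp (\<theta> * (real a - 1)) * exp (\<theta> * (real (sum_list l) - real (length l)))
      = exp (\<theta> * (real (sum_list (a # l)) - real (length (a # l))))"
    by (simp only: exp_add[symmetric])
  with Cons show ?case by (simp only: list.map prod_list.Cons) (simp add: mult_ac)
qed simp

text \<open>The degrees of a tree sum to its size minus one, so the tilting factors multiply to
  \<open>exp (- \<theta>)\<close> on every tree.\<close>

lemma gw_weight_tilted:
  "gw_weight mu t = exp \<theta> * prod_list (map (\<lambda>d. mu d * exp (\<theta> * (real d - 1))) (preorder_degrees [t]))"
proof -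
  have "real (sum_list (preorder_degrees [t])) - real (length (preorder_degrees [t])) = -1"
    using sum_list_preorder_degrees[of "[t]"] by simp
  then show ?thesis
    using prod_list_preorder_degrees[of mu "[t]"] by (simp add: prod_list_tilted exp_minus)
qed

lemma low_degree_mass_le:
  assumes nonneg: "\<And>d. 0 \<le> mu d"
  shows "event_mass mu n (\<lambda>t. maxdeg t < K) \<le> exp \<theta> * (\<Sum>d<K. mu d * exp (\<theta> * (real d - 1))) ^ n"
proof -
  define nu where "nu d = mu d * exp (\<theta> * (real d - 1))" for d
  define code where "code t = preorder_degrees [t]" for t
  have nu_nonneg: "0 \<le> prod_list (map nu l)" for l
    unfolding nu_def by (auto intro!: prod_list_nonneg mult_nonneg_nonneg nonneg)
  have code_into: "code ` {t. tsize t = n \<and> maxdeg t < K} \<subseteq> lists_of_length {..<K} n"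
    using preorder_degrees_less_maxdeg[of "[_]" K] by (auto simp: code_def length_preorder_degrees)
  have "gw_weight mu t = exp \<theta> * prod_list (map nu (code t))" for t
    unfolding nu_def code_def by (rule gw_weight_tilted)
  then have "event_mass mu n (\<lambda>t. maxdeg t < K)
      = exp \<theta> * (\<Sum>t | tsize t = n \<and> maxdeg t < K. prod_list (map nu (code t)))"
    unfolding event_mass_def by (simp add: sum_distrib_left)
  also have "\<dots> = exp \<theta> * (\<Sum>l\<in>code ` {t. tsize t = n \<and> maxdeg t < K}. prod_list (map nu l))"
    using inj_preorder_degrees unfolding code_def by (simp add: sum.reindex inj_on_subset)
  also have "\<dots> \<le> exp \<theta> * (\<Sum>l\<in>lists_of_length {..<K} n. prod_list (map nu l))"
    using code_into nu_nonneg by (intro mult_left_mono sum_mono2 finite_lists_of_length) auto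
  also have "\<dots> = exp \<theta> * (\<Sum>d<K. nu d) ^ n"
    by (simp add: sum_prod_list_lists_of_length)
  finally show ?thesis unfolding nu_def .
qed

section \<open>Truncations with a mean deficit\<close>

fun bounded_trees :: "nat \<Rightarrow> nat \<Rightarrow> ptree set" where
  "bounded_trees K 0 = {}"
| "bounded_trees K (Suc h) = Node ` (\<Union>d<K. lists_of_length (bounded_trees K h) d)"

lemma finite_bounded_trees: "finite (bounded_trees K h)"
  by (induction h) (auto intro: finite_lists_of_length)

lemma sum_Node_lists_of_length_less:
  assumes "finite A"
  shows "(\<Sum>t\<in>Node ` (\<Union>d<K. lists_of_length A d). F t)
    = (\<Sum>d<K. \<Sum>ts\<in>lists_of_length A d. F (Node ts))"
proof -
  have "(\<Sum>t\<in>Node ` (\<Union>d<K. lists_of_length A d). F t) = (\<Sum>ts\<in>(\<Union>d<K. lists_of_length A d). F (Node ts))"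
    by (simp add: sum.reindex inj_on_subset[OF inj_Node])
  also have "\<dots> = (\<Sum>d<K. \<Sum>ts\<in>lists_of_length A d. F (Node ts))"
    by (rule sum.UNION_disjoint) (auto simp: finite_lists_of_length assms)
  finally show ?thesis .
qed

text \<open>Under these hypotheses a \<open>mu\<close>-tree has all degrees below \<open>K\<close> and is finite with
  probability at least \<open>1 - 2 / K\<close>, while its expected size on that event is at most \<open>1 / tau\<close>.\<close>

locale subcritical_truncation =
  fixes mu :: "nat \<Rightarrow> real" and K :: nat and tau :: real
  assumes mu_nonneg: "\<And>d. 0 \<le> mu d"
    and K_ge: "12 \<le> K"
    and tau_pos: "0 < tau" and tau_le_1: "tau \<le> 1"
    and truncated_mean: "(\<Sum>d<K. real d * mu d) = 1 - tau"
    and truncated_mass_ge: "1 - tau / K \<le> (\<Sum>d<K. mu d)"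
    and truncated_mass_le: "(\<Sum>d<K. mu d) \<le> 1"
begin

definition gf :: "real \<Rightarrow> real" where
  "gf s = (\<Sum>d<K. mu d * s ^ d)"

definition height_mass :: "nat \<Rightarrow> real" where
  "height_mass h = (\<Sum>t\<in>bounded_trees K h. gw_weight mu t)"

definition height_size_moment :: "nat \<Rightarrow> real" where
  "height_size_moment h = (\<Sum>t\<in>bounded_trees K h. real (tsize t) * gw_weight mu t)"

lemma height_mass_Suc: "height_mass (Suc h) = gf (height_mass h)"
  unfolding height_mass_def gf_def
  by (simp add: sum_Node_lists_of_length_less finite_bounded_trees sum_distrib_left[symmetric]
      sum_prod_list_lists_of_length)

lemma height_size_moment_Suc:
  "height_size_moment (Suc h) = (\<Sum>d<K. mu d *
     (height_mass h ^ d + real d * height_mass h ^ (d - 1) * height_size_moment h))"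
proof -
  let ?w = "gw_weight mu" and ?s = "\<lambda>t. real (tsize t)"
  have "height_size_moment (Suc h) = (\<Sum>d<K. mu d * (\<Sum>ts\<in>lists_of_length (bounded_trees K h) d.
      prod_list (map ?w ts) + sum_list (map ?s ts) * prod_list (map ?w ts)))"
    unfolding height_size_moment_def
    by (simp add: sum_Node_lists_of_length_less finite_bounded_trees real_sum_list_tsize algebra_simps
        sum_distrib_left)
  then show ?thesis
    unfolding height_mass_def height_size_moment_def
    by (simp add: sum.distrib sum_prod_list_lists_of_length sum_sum_list_prod_list_lists_of_length
        finite_bounded_trees)
qed

lemma gf_nonneg: "0 \<le> s \<Longrightarrow> 0 \<le> gf s"
  unfolding gf_def by (auto intro!: sum_nonneg mult_nonneg_nonneg mu_nonneg)

lemma gf_mono: "0 \<le> s \<Longrightarrow> s \<le> t \<Longrightarrow> gf s \<le> gf t"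
  unfolding gf_def by (auto intro!: sum_mono mult_left_mono power_mono mu_nonneg)

lemma gf_le_1: "0 \<le> s \<Longrightarrow> s \<le> 1 \<Longrightarrow> gf s \<le> 1"
proof -
  assume "0 \<le> s" "s \<le> 1"
  then have "gf s \<le> (\<Sum>d<K. mu d)"
    unfolding gf_def by (intro sum_mono mult_right_le_one_le mu_nonneg power_le_one) auto
  with truncated_mass_le show ?thesis by linarith
qed

lemma gf_diff_le: "0 \<le> s \<Longrightarrow> s \<le> t \<Longrightarrow> t \<le> 1 \<Longrightarrow> gf t - gf s \<le> (1 - tau) * (t - s)"
proof -
  assume st: "0 \<le> s" "s \<le> t" "t \<le> 1"
  have "gf t - gf s = (\<Sum>d<K. mu d * (t ^ d - s ^ d))"
    unfolding gf_def by (simp add: sum_subtractf algebra_simps)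
  also have "\<dots> \<le> (\<Sum>d<K. mu d * (real d * (t - s)))"
    using st by (intro sum_mono mult_left_mono power_diff_le_mult_diff mu_nonneg)
  also have "\<dots> = (1 - tau) * (t - s)"
    by (simp add: truncated_mean[symmetric] sum_distrib_left mult_ac)
  finally show ?thesis .
qed

lemma height_mass_bounds: "0 \<le> height_mass h \<and> height_mass h \<le> 1"
  by (induction h) (simp_all add: height_mass_def[of 0] height_mass_Suc gf_nonneg gf_le_1)

text \<open>Bernoulli's inequality and the mass condition make \<open>1 - 1 / K\<close> a subsolution of the fixed
  point equation; the contraction \<open>gf_diff_le\<close> then drives \<open>height_mass\<close> above it.\<close>

lemma gf_subsolution: "1 - 1 / real K \<le> gf (1 - 1 / real K)"
proof -
  have K: "12 \<le> real K" using K_ge by simp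
  have "(\<Sum>d<K. mu d * (1 - real d / real K)) \<le> gf (1 - 1 / real K)"
    unfolding gf_def
  proof (intro sum_mono mult_left_mono mu_nonneg)
    fix d
    have "1 + real d * (- 1 / real K) \<le> (1 + (- 1 / real K)) ^ d"
      by (rule Bernoulli_inequality) (use K in simp)
    then show "1 - real d / real K \<le> (1 - 1 / real K) ^ d" by simp
  qed
  moreover have "(\<Sum>d<K. mu d * (1 - real d / real K)) = (\<Sum>d<K. mu d) - (1 - tau) / real K"
    by (simp add: truncated_mean[symmetric] algebra_simps sum_subtractf sum_divide_distrib)
  moreover have "1 - tau / K - (1 - tau) / real K = 1 - 1 / real K"
    using K by (simp add: field_simps)
  ultimately show ?thesis using truncated_mass_ge by linarith
qed

lemma height_mass_ge: "1 - 1 / real K - height_mass h \<le> (1 - tau) ^ h"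
proof (induction h)
  case (Suc h)
  let ?x = "1 - 1 / real K"
  have x: "0 \<le> ?x" "?x \<le> 1" using K_ge by auto
  show ?case
  proof (cases "?x \<le> height_mass h")
    case True
    then have "?x \<le> height_mass (Suc h)"
      using gf_subsolution gf_mono[OF x(1) True] by (simp add: height_mass_Suc)
    then show ?thesis using zero_le_power[of "1 - tau" "Suc h"] tau_le_1 by linarith
  next
    case False
    then have "gf ?x - gf (height_mass h) \<le> (1 - tau) * (?x - height_mass h)"
      using gf_diff_le[of "height_mass h" ?x] height_mass_bounds x by auto
    also have "\<dots> \<le> (1 - tau) * (1 - tau) ^ h"
      using Suc tau_le_1 by (intro mult_left_mono) auto
    finally show ?thesis using gf_subsolution by (simp add: height_mass_Suc)
  qed
qed (simp add: height_mass_def)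

lemma exists_height_mass_ge: "\<exists>h. 1 - 2 / real K \<le> height_mass h"
proof -
  have "(\<lambda>h. (1 - tau) ^ h) \<longlonglongrightarrow> 0"
    using tau_pos tau_le_1 by (intro LIMSEQ_power_zero) auto
  moreover have "0 < 1 / real K" using K_ge by simp
  ultimately obtain h where "(1 - tau) ^ h < 1 / real K"
    using order_tendstoD(2) eventually_sequentially by (metis le_refl)
  moreover have "2 / real K = 2 * (1 / real K)" by simp
  ultimately show ?thesis using height_mass_ge[of h] by (intro exI[of _ h]) linarith
qed

lemma height_size_moment_bounds: "0 \<le> height_size_moment h \<and> height_size_moment h \<le> 1 / tau"
proof (induction h)
  case (Suc h)
  have Q: "0 \<le> height_mass h" "height_mass h \<le> 1" using height_mass_bounds by auto
  have "height_size_moment (Suc h) \<le> (\<Sum>d<K. mu d * (1 + real d * 1 * height_size_moment h))"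
    unfolding height_size_moment_Suc using Q Suc
    by (intro sum_mono mult_left_mono add_mono mult_right_mono power_le_one mu_nonneg) auto
  also have "\<dots> = (\<Sum>d<K. mu d) + (1 - tau) * height_size_moment h"
    by (simp add: truncated_mean[symmetric] algebra_simps sum.distrib sum_distrib_left)
  also have "\<dots> \<le> 1 + (1 - tau) * (1 / tau)"
    using truncated_mass_le Suc tau_le_1 by (intro add_mono mult_left_mono) auto
  also have "\<dots> = 1 / tau" using tau_pos by (simp add: field_simps)
  finally show ?case
    unfolding height_size_moment_def
    by (auto intro!: sum_nonneg mult_nonneg_nonneg gw_weight_nonneg mu_nonneg)
qed (use tau_pos in \<open>simp add: height_size_moment_def\<close>)

lemma forest_mass_size_gt_le:
  assumes T: "2 * real K / tau \<le> real T"
  shows "(\<Sum>ts\<in>{ts\<in>lists_of_length (bounded_trees K h) K. T < sum_list (map tsize ts)}.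
      prod_list (map (gw_weight mu) ts)) \<le> height_mass h ^ (K - 1) / 2"
proof -
  define q where "q = height_mass h"
  define L where "L = lists_of_length (bounded_trees K h) K"
  define p where "p ts = prod_list (map (gw_weight mu) ts)" for ts
  define s where "s ts = sum_list (map tsize ts)" for ts
  have K: "12 \<le> real K" using K_ge by simp
  have "0 < 2 * real K / tau" using tau_pos K by simp
  with T have T_pos: "0 < real T" by linarith
  have "(\<Sum>ts\<in>{ts\<in>L. real T < real (s ts)}. p ts) \<le> (\<Sum>ts\<in>L. real (s ts) * p ts) / real T"
    unfolding L_def p_def using T_pos
    by (intro sum_Markov) (auto intro!: prod_list_nonneg gw_weight_nonneg mu_nonneg
        simp: finite_lists_of_length finite_bounded_trees)
  also have "(\<Sum>ts\<in>L. real (s ts) * p ts) = real K * q ^ (K - 1) * height_size_moment h"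
    using sum_sum_list_prod_list_lists_of_length[OF finite_bounded_trees,
        where d=K and g="\<lambda>t. real (tsize t)" and w="gw_weight mu"]
    unfolding L_def p_def s_def q_def height_mass_def height_size_moment_def real_sum_list_tsize
    by (simp add: mult_ac)
  also have "\<dots> / real T \<le> real K * q ^ (K - 1) * (1 / tau) / (2 * real K / tau)"
    using height_size_moment_bounds[of h] height_mass_bounds[of h] T T_pos tau_pos K
    unfolding q_def by (intro frac_le mult_left_mono mult_nonneg_nonneg) auto
  also have "\<dots> = q ^ (K - 1) / 2" using tau_pos K by (simp add: field_simps)
  finally show ?thesis unfolding L_def p_def s_def q_def by simp
qed

lemma exists_forest_mass_ge:
  assumes T: "2 * real K / tau \<le> real T"
  shows "\<exists>h. exp (-4) / 3 \<le> (\<Sum>ts\<in>{ts\<in>lists_of_length (bounded_trees K h) K. sum_list (map tsize ts) \<le> T}.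
      prod_list (map (gw_weight mu) ts))"
proof -
  obtain h where Qh: "1 - 2 / real K \<le> height_mass h"
    using exists_height_mass_ge by blast
  define q where "q = height_mass h"
  define L where "L = lists_of_length (bounded_trees K h) K"
  define p where "p ts = prod_list (map (gw_weight mu) ts)" for ts
  define s where "s ts = sum_list (map tsize ts)" for ts
  have K: "12 \<le> real K" using K_ge by simp
  have "2 / real K \<le> 1 / 6" using K by (simp add: field_simps)
  with Qh height_mass_bounds[of h] have q: "3 / 4 \<le> q" "q \<le> 1" unfolding q_def by auto
  have finL: "finite L" unfolding L_def by (simp add: finite_lists_of_length finite_bounded_trees)
  have "q ^ K = sum p L"
    unfolding L_def p_def q_def height_mass_def by (simp add: sum_prod_list_lists_of_length finite_bounded_trees)
  also have "\<dots> = sum p ({ts\<in>L. s ts \<le> T} \<union> {ts\<in>L. T < s ts})"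
    by (rule arg_cong[where f="sum p"]) auto
  also have "\<dots> = (\<Sum>ts\<in>{ts\<in>L. s ts \<le> T}. p ts) + (\<Sum>ts\<in>{ts\<in>L. T < s ts}. p ts)"
    by (rule sum.union_disjoint) (use finL in auto)
  finally have split: "q ^ K = \<dots>" .
  have qK: "q ^ K = q * q ^ (K - 1)" using K_ge by (simp add: power_eq_if)
  have "exp (-4) / 3 \<le> q ^ K / 3"
    using exp_neg4_le_power[of K] power_mono[OF Qh, of K] K_ge K unfolding q_def by simp
  also have "\<dots> = q ^ (K - 1) * (q / 3)" using qK by simp
  also have "\<dots> \<le> q ^ (K - 1) * (q - 1 / 2)" using q by (intro mult_left_mono) auto
  also have "\<dots> = q ^ K - q ^ (K - 1) / 2" using qK by (simp add: algebra_simps)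
  also have "\<dots> \<le> (\<Sum>ts\<in>{ts\<in>L. s ts \<le> T}. p ts)"
    using split forest_mass_size_gt_le[OF T, of h] unfolding L_def p_def s_def q_def by linarith
  finally show ?thesis unfolding L_def p_def s_def by (intro exI[of _ h])
qed

lemma high_degree_mass_ge:
  assumes T: "2 * real K / tau \<le> real T"
  shows "mu K * (exp (-4) / 3) \<le> (\<Sum>n=K..Suc T. event_mass mu n (\<lambda>t. K \<le> maxdeg t))"
proof -
  obtain h where forests: "exp (-4) / 3 \<le> (\<Sum>ts\<in>{ts\<in>lists_of_length (bounded_trees K h) K.
      sum_list (map tsize ts) \<le> T}. prod_list (map (gw_weight mu) ts))"
    using exists_forest_mass_ge[OF T] by blast
  define G where "G = {ts\<in>lists_of_length (bounded_trees K h) K. sum_list (map tsize ts) \<le> T}"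
  define H where "H n = {t. tsize t = n \<and> K \<le> maxdeg t}" for n
  have "G \<subseteq> lists_of_length (bounded_trees K h) K" unfolding G_def by blast
  then have finG: "finite G"
    by (rule finite_subset) (simp add: finite_lists_of_length finite_bounded_trees)
  have "mu K * (exp (-4) / 3) \<le> mu K * (\<Sum>ts\<in>G. prod_list (map (gw_weight mu) ts))"
    using forests unfolding G_def by (rule mult_left_mono) (rule mu_nonneg)
  also have "\<dots> = (\<Sum>t\<in>Node ` G. gw_weight mu t)"
    by (simp add: sum.reindex inj_on_subset[OF inj_Node] G_def sum_distrib_left)
  also have "\<dots> \<le> (\<Sum>t\<in>(\<Union>n\<in>{K..Suc T}. H n). gw_weight mu t)"
  proof (rule sum_mono2)
    show "Node ` G \<subseteq> (\<Union>n\<in>{K..Suc T}. H n)"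
    proof
      fix t assume "t \<in> Node ` G"
      then obtain ts where t: "t = Node ts" "length ts = K" "sum_list (map tsize ts) \<le> T"
        unfolding G_def by auto
      then have "K \<le> tsize t" "tsize t \<le> Suc T" "K \<le> maxdeg t"
        using length_le_sum_tsize[of ts] length_le_maxdeg[of ts] by auto
      then show "t \<in> (\<Union>n\<in>{K..Suc T}. H n)" unfolding H_def by auto
    qed
  qed (auto simp: H_def finite_tsize_eq_and gw_weight_nonneg mu_nonneg)
  also have "\<dots> = (\<Sum>n=K..Suc T. event_mass mu n (\<lambda>t. K \<le> maxdeg t))"
    unfolding event_mass_def H_def by (rule sum.UNION_disjoint) (auto simp: finite_tsize_eq_and)
  finally show ?thesis .
qed

text \<open>Summing \<open>low_degree_mass_le\<close> over \<open>n \<ge> K\<close> gives the geometric tail bound on the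
  left of \<open>tilt_small\<close>; comparing with \<open>high_degree_mass_ge\<close>, some single size \<open>n\<close> inherits
  the ratio.\<close>

lemma exists_size_high_degree_dominant:
  assumes T: "2 * real K / tau \<le> real T"
    and tilt_lt_1: "(\<Sum>d<K. mu d * exp (\<theta> * (real d - 1))) < 1"
    and tilt_small: "exp \<theta> * (\<Sum>d<K. mu d * exp (\<theta> * (real d - 1))) ^ K
        / (1 - (\<Sum>d<K. mu d * exp (\<theta> * (real d - 1)))) \<le> eps * (mu K * (exp (-4) / 3))"
    and "0 < mu K" and "0 < eps"
  shows "\<exists>n\<in>{K..Suc T}. 0 < event_mass mu n (\<lambda>t. K \<le> maxdeg t)
    \<and> event_mass mu n (\<lambda>t. \<not> K \<le> maxdeg t) \<le> eps * event_mass mu n (\<lambda>t. K \<le> maxdeg t)"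
proof (rule exists_le_mult_of_sum_le)
  define psi where "psi = (\<Sum>d<K. mu d * exp (\<theta> * (real d - 1)))"
  have "0 \<le> psi" unfolding psi_def by (auto intro!: sum_nonneg mult_nonneg_nonneg mu_nonneg)
  have "(\<Sum>n=K..Suc T. event_mass mu n (\<lambda>t. \<not> K \<le> maxdeg t)) \<le> (\<Sum>n=K..Suc T. exp \<theta> * psi ^ n)"
    unfolding psi_def not_le by (intro sum_mono low_degree_mass_le mu_nonneg)
  also have "\<dots> \<le> exp \<theta> * (psi ^ K / (1 - psi))"
    using \<open>0 \<le> psi\<close> tilt_lt_1 unfolding psi_def sum_distrib_left[symmetric]
    by (intro mult_left_mono sum_power_le_geometric) auto
  also have "\<dots> \<le> eps * (mu K * (exp (-4) / 3))"
    using tilt_small unfolding psi_def by simp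
  also have "\<dots> \<le> eps * (\<Sum>n=K..Suc T. event_mass mu n (\<lambda>t. K \<le> maxdeg t))"
    using high_degree_mass_ge[OF T] \<open>0 < eps\<close> by (intro mult_left_mono) auto
  finally show "(\<Sum>n=K..Suc T. event_mass mu n (\<lambda>t. \<not> K \<le> maxdeg t))
    \<le> eps * (\<Sum>n=K..Suc T. event_mass mu n (\<lambda>t. K \<le> maxdeg t))" .
  show "0 < (\<Sum>n=K..Suc T. event_mass mu n (\<lambda>t. K \<le> maxdeg t))"
    using \<open>0 < mu K\<close> by (intro order_less_le_trans[OF _ high_degree_mass_ge[OF T]]) simp
qed (auto intro: event_mass_nonneg mu_nonneg)

end

section \<open>Offspring distributions with sparse support\<close>

definition atom_weight :: "(nat \<Rightarrow> nat) \<Rightarrow> nat \<Rightarrow> real" where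
  "atom_weight k i = (1 / 2) ^ i / real (k i)"

lemma atom_weight_le: "1 \<le> k i \<Longrightarrow> atom_weight k i \<le> (1 / 2) ^ i"
  unfolding atom_weight_def by (simp add: divide_le_eq_1 field_simps)

text \<open>Bounds the tilted mass of the degrees below \<open>k j\<close> using only \<open>k 1, \<dots>, k (j - 1)\<close>,
  so that the tilt can be chosen before \<open>k j\<close>; the mass at degree \<open>0\<close> is over-estimated by
  \<open>1 - \<Sum>i\<in>{1..<j}. atom_weight k i\<close>.\<close>

definition tilt_bound :: "(nat \<Rightarrow> nat) \<Rightarrow> nat \<Rightarrow> real \<Rightarrow> real" where
  "tilt_bound k j \<theta> = (1 - (\<Sum>i\<in>{1..<j}. atom_weight k i)) * exp (- \<theta>)
     + (\<Sum>i\<in>{1..<j}. atom_weight k i * exp (\<theta> * (real (k i) - 1)))"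

text \<open>\<open>distr\<close> puts mass \<open>(1 / 2) ^ i / k i\<close> at \<open>k i\<close> for \<open>i > 0\<close> and the rest at \<open>k 0 = 0\<close>,
  so its mean is \<open>\<Sum>i>0. (1 / 2) ^ i = 1\<close> whatever the (strictly increasing) \<open>k i\<close> are.\<close>

locale sparse_offspring =
  fixes k :: "nat \<Rightarrow> nat"
  assumes strict_mono_k: "strict_mono k" and k_0: "k 0 = 0"
begin

definition atom :: "nat \<Rightarrow> real" where
  "atom i = (if i = 0 then 1 - (\<Sum>n. atom_weight k (Suc n)) else atom_weight k i)"

definition distr :: "nat \<Rightarrow> real" where
  "distr d = (if d \<in> range k then atom (inv k d) else 0)"

lemma k_ge_1: "0 < i \<Longrightarrow> 1 \<le> k i"
  using strict_mono_less[OF strict_mono_k, of 0 i] k_0 by simp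

lemma distr_k: "distr (k i) = atom i"
  unfolding distr_def by (simp add: strict_mono_imp_inj_on[OF strict_mono_k])

lemma distr_outside: "d \<notin> range k \<Longrightarrow> distr d = 0"
  unfolding distr_def by simp

lemma sum_lessThan_k:
  assumes "\<And>d. d \<notin> range k \<Longrightarrow> h d = 0"
  shows "(\<Sum>d<k j. h d) = (\<Sum>i<j. h (k i))"
proof -
  have "(\<Sum>i<j. h (k i)) = sum h (k ` {..<j})"
    using strict_mono_imp_inj_on[OF strict_mono_k] by (simp add: sum.reindex inj_on_subset)
  also have "\<dots> = (\<Sum>d<k j. h d)"
  proof (rule sum.mono_neutral_left)
    show "k ` {..<j} \<subseteq> {..<k j}"
      using strict_monoD[OF strict_mono_k] by auto
    show "\<forall>d\<in>{..<k j} - k ` {..<j}. h d = 0"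
    proof
      fix d assume d: "d \<in> {..<k j} - k ` {..<j}"
      show "h d = 0"
      proof (cases "d \<in> range k")
        case True
        then obtain i where "d = k i" by auto
        with d strict_mono_less[OF strict_mono_k] show ?thesis by auto
      qed (rule assms)
    qed
  qed simp
  finally show ?thesis ..
qed

lemma summable_atom_weight: "summable (\<lambda>n. atom_weight k (Suc n))"
proof (rule summable_comparison_test'[OF sums_summable[OF half_powers_Suc_sums], of 0])
  fix n
  show "norm (atom_weight k (Suc n)) \<le> (1 / 2) ^ Suc n"
    using atom_weight_le[of k "Suc n"] k_ge_1[of "Suc n"] by (simp add: atom_weight_def)
qed

lemma suminf_atom_weight_le_1: "(\<Sum>n. atom_weight k (Suc n)) \<le> 1"
proof -
  have "(\<Sum>n. atom_weight k (Suc n)) \<le> (\<Sum>n. (1 / 2 :: real) ^ Suc n)"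
    by (rule suminf_le[OF _ summable_atom_weight sums_summable[OF half_powers_Suc_sums]])
      (rule atom_weight_le, rule k_ge_1, simp)
  also have "\<dots> = 1" by (rule sums_unique[OF half_powers_Suc_sums, symmetric])
  finally show ?thesis .
qed

lemma atom_nonneg: "0 \<le> atom i"
  using suminf_atom_weight_le_1 unfolding atom_def atom_weight_def by simp

lemma distr_nonneg: "0 \<le> distr d"
  unfolding distr_def using atom_nonneg by simp

lemma atom_sums: "atom sums 1"
proof -
  have "(\<lambda>n. atom (Suc n)) sums (\<Sum>n. atom_weight k (Suc n))"
    unfolding atom_def using summable_atom_weight by (simp add: summable_sums)
  then have "atom sums ((\<Sum>n. atom_weight k (Suc n)) + atom 0)"
    by (simp only: sums_Suc_iff)
  then show ?thesis by (simp add: atom_def)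
qed

lemma mean_term_k: "real (k i) * distr (k i) = (if i = 0 then 0 else (1 / 2) ^ i)"
proof (cases "i = 0")
  case False
  with k_ge_1[of i] show ?thesis by (simp add: distr_k atom_def atom_weight_def)
qed (simp add: k_0)

lemma critical_distr: "critical distr"
proof -
  define g where "g i = (if i = 0 then 0 else (1 / 2 :: real) ^ i)" for i
  have "(\<lambda>n. g (Suc n)) = (\<lambda>n. (1 / 2) ^ Suc n)"
    unfolding g_def by simp
  with half_powers_Suc_sums have "(\<lambda>n. g (Suc n)) sums 1"
    by (simp only:)
  then have "g sums (1 + g 0)"
    by (simp only: sums_Suc_iff)
  then have "g sums 1"
    by (simp add: g_def)
  moreover have "(\<lambda>i. real (k i) * distr (k i)) = g"
    by (rule ext) (simp add: mean_term_k g_def)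
  ultimately have "(\<lambda>d. real d * distr d) sums 1"
    using sums_mono_reindex[OF strict_mono_k, of "\<lambda>d. real d * distr d"] distr_outside by simp
  moreover have "distr sums 1"
    using sums_mono_reindex[OF strict_mono_k, of distr] distr_outside atom_sums by (simp add: distr_k)
  ultimately show ?thesis
    unfolding critical_def offspring_distr_def using distr_nonneg by blast
qed

lemma truncated_mean_k: "(\<Sum>d<k (Suc j). real d * distr d) = 1 - (1 / 2) ^ j"
proof -
  have "(\<Sum>d<k (Suc j). real d * distr d) = (\<Sum>i<Suc j. real (k i) * distr (k i))"
    by (rule sum_lessThan_k) (simp add: distr_outside)
  also have "\<dots> = (\<Sum>i<j. (1 / 2) ^ Suc i)"
    by (simp add: mean_term_k sum.lessThan_Suc_shift del: sum.lessThan_Suc power_Suc)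
  also have "\<dots> = (\<Sum>i\<in>{1..<Suc j}. (1 / 2) ^ i)"
    by (simp only: sum_Suc_shift_lessThan)
  finally show ?thesis by (simp only: sum_half_powers)
qed

lemma truncated_mass_k: "(\<Sum>d<k j. distr d) = 1 - (\<Sum>n. atom (n + j))"
proof -
  have "(\<Sum>d<k j. distr d) = (\<Sum>i<j. atom i)"
    by (simp add: sum_lessThan_k distr_outside distr_k)
  moreover have "(\<Sum>n. atom n) = (\<Sum>n. atom (n + j)) + (\<Sum>i<j. atom i)"
    by (rule suminf_split_initial_segment[OF sums_summable[OF atom_sums]])
  ultimately show ?thesis using sums_unique[OF atom_sums] by simp
qed

lemma atom_tail_nonneg: "0 \<le> (\<Sum>n. atom (n + j))"
  by (intro suminf_nonneg summable_ignore_initial_segment sums_summable[OF atom_sums] atom_nonneg)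

lemma atom_tail_le: "(\<Sum>n. atom (n + Suc j)) \<le> (1 / 2) ^ j / real (k (Suc j))"
proof -
  define K where "K = real (k (Suc j))"
  have "0 < K" unfolding K_def using k_ge_1[of "Suc j"] by simp
  have geometric: "(\<lambda>n. (1 / 2) ^ Suc j * (1 / 2) ^ n / K) sums ((1 / 2) ^ Suc j * (1 / (1 - 1 / 2)) / K)"
    by (intro sums_divide sums_mult geometric_sums) simp
  have "(\<Sum>n. atom (n + Suc j)) \<le> (\<Sum>n. (1 / 2) ^ Suc j * (1 / 2) ^ n / K)"
  proof (rule suminf_le[OF _ summable_ignore_initial_segment[OF sums_summable[OF atom_sums]]
        sums_summable[OF geometric]])
    fix n
    have "K \<le> real (k (n + Suc j))"
      unfolding K_def using strict_mono_less_eq[OF strict_mono_k] by simp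
    then have "atom_weight k (n + Suc j) \<le> (1 / 2) ^ (n + Suc j) / K"
      unfolding atom_weight_def using \<open>0 < K\<close> by (intro divide_left_mono) auto
    then show "atom (n + Suc j) \<le> (1 / 2) ^ Suc j * (1 / 2) ^ n / K"
      unfolding atom_def by (simp add: power_add mult.commute)
  qed
  also have "\<dots> = (1 / 2) ^ j / K"
    using sums_unique[OF geometric] by simp
  finally show ?thesis unfolding K_def .
qed

lemma subcritical_truncation_k:
  assumes "12 \<le> k (Suc j)"
  shows "subcritical_truncation distr (k (Suc j)) ((1 / 2) ^ j)"
proof
  show "1 - (1 / 2) ^ j / real (k (Suc j)) \<le> (\<Sum>d<k (Suc j). distr d)"
    using atom_tail_le[of j] by (simp add: truncated_mass_k)
  show "(\<Sum>d<k (Suc j). distr d) \<le> 1"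
    using atom_tail_nonneg[of "Suc j"] by (simp add: truncated_mass_k)
qed (simp_all add: assms distr_nonneg truncated_mean_k power_le_one)

lemma tilt_le_tilt_bound:
  "(\<Sum>d<k (Suc j). distr d * exp (\<theta> * (real d - 1))) \<le> tilt_bound k (Suc j) \<theta>"
proof -
  let ?e = "\<lambda>i. atom_weight k (Suc i) * exp (\<theta> * (real (k (Suc i)) - 1))"
  have "(\<Sum>d<k (Suc j). distr d * exp (\<theta> * (real d - 1))) = (\<Sum>i<Suc j. distr (k i) * exp (\<theta> * (real (k i) - 1)))"
    by (rule sum_lessThan_k) (simp add: distr_outside)
  also have "\<dots> = atom 0 * exp (- \<theta>) + (\<Sum>i<j. ?e i)"
    by (simp add: sum.lessThan_Suc_shift distr_k k_0 atom_def del: sum.lessThan_Suc)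
  also have "\<dots> \<le> (1 - (\<Sum>i<j. atom_weight k (Suc i))) * exp (- \<theta>) + (\<Sum>i<j. ?e i)"
  proof -
    have "(\<Sum>i<j. atom_weight k (Suc i)) \<le> (\<Sum>n. atom_weight k (Suc n))"
      by (rule sum_le_suminf[OF summable_atom_weight]) (auto simp: atom_weight_def)
    then show ?thesis unfolding atom_def by (intro add_right_mono mult_right_mono) auto
  qed
  also have "\<dots> = tilt_bound k (Suc j) \<theta>"
    by (simp only: tilt_bound_def sum_Suc_shift_lessThan)
  finally show ?thesis .
qed

end

section \<open>Choosing the support\<close>

text \<open>Requirements on the \<open>j\<close>-th support point \<open>K\<close>: beyond \<open>K\<close> the function \<open>f\<close> exceeds
  \<open>2 + 2 ^ j\<close>, so that \<open>n / f n < K\<close> for all \<open>n \<le> 1 + K * 2 ^ j\<close>, and some tilt makes the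
  geometric bound on low-degree trees a fraction \<open>1 / (j + 1)\<close> of the mass \<open>distr K * exp (-4) / 3\<close>
  of high-degree ones.\<close>

definition good_cutoff :: "(nat \<Rightarrow> real) \<Rightarrow> nat \<Rightarrow> (nat \<Rightarrow> nat) \<Rightarrow> nat \<Rightarrow> bool" where
  "good_cutoff f j k K \<longleftrightarrow> k (j - 1) < K \<and> 12 \<le> K \<and> (\<forall>n\<ge>K. 2 + 2 ^ j < f n) \<and>
     (\<exists>\<theta>>0. tilt_bound k j \<theta> < 1 \<and> exp \<theta> * tilt_bound k j \<theta> ^ K / (1 - tilt_bound k j \<theta>)
        \<le> 1 / (real j + 1) * ((1 / 2) ^ j / real K * (exp (-4) / 3)))"

lemma good_cutoff_cong:
  assumes "0 < j" and "\<And>i. i < j \<Longrightarrow> k i = k' i"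
  shows "good_cutoff f j k K = good_cutoff f j k' K"
proof -
  have "tilt_bound k j = tilt_bound k' j"
    using assms(2) unfolding tilt_bound_def[abs_def] atom_weight_def by (intro ext sum.cong refl) auto
  with assms show ?thesis unfolding good_cutoff_def by simp
qed

text \<open>At \<open>\<theta> = 0\<close> the tilt bound equals \<open>1\<close>, and its derivative there is
  \<open>\<Sum>i\<in>{1..<j}. (1 / 2) ^ i - 1 < 0\<close>.\<close>

lemma exists_tilt_bound_lt_1:
  assumes "0 < j" and k_pos: "\<And>i. 0 < i \<Longrightarrow> i < j \<Longrightarrow> 1 \<le> k i"
  shows "\<exists>\<theta>>0. 0 \<le> tilt_bound k j \<theta> \<and> tilt_bound k j \<theta> < 1"
proof -
  obtain j' where j: "j = Suc j'" using assms(1) not0_implies_Suc by blast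
  define S where "S = (\<Sum>i\<in>{1..<j}. atom_weight k i)"
  have tilt: "tilt_bound k j \<theta> = (1 - S) * exp (- \<theta>)
      + (\<Sum>i\<in>{1..<j}. atom_weight k i * exp (\<theta> * (real (k i) - 1)))" for \<theta>
    unfolding tilt_bound_def S_def ..
  have weight_k: "atom_weight k i * real (k i) = (1 / 2) ^ i" if "i \<in> {1..<j}" for i
    using k_pos[of i] that unfolding atom_weight_def by simp
  have "S \<le> (\<Sum>i\<in>{1..<j}. (1 / 2) ^ i)"
    unfolding S_def using k_pos by (intro sum_mono atom_weight_le) auto
  then have S_le_1: "S \<le> 1"
    using sum_half_powers[of j'] zero_le_power[of "1 / 2 :: real" j'] unfolding j by linarith
  define D where "D = - (1 - S) + (\<Sum>i\<in>{1..<j}. atom_weight k i * (real (k i) - 1))"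
  have deriv: "((\<lambda>\<theta>. tilt_bound k j \<theta>) has_real_derivative D) (at 0)"
    unfolding tilt D_def by (auto intro!: derivative_eq_intros simp: algebra_simps)
  have "(\<Sum>i\<in>{1..<j}. atom_weight k i * (real (k i) - 1)) = (\<Sum>i\<in>{1..<j}. (1 / 2) ^ i) - S"
    unfolding S_def by (simp add: right_diff_distrib sum_subtractf weight_k)
  then have "D < 0"
    using sum_half_powers[of j'] unfolding D_def j by simp
  then obtain d where "0 < d"
    and d: "\<And>h. 0 < h \<Longrightarrow> h < d \<Longrightarrow> tilt_bound k j (0 + h) < tilt_bound k j 0"
    using DERIV_neg_dec_right[OF deriv] by blast
  have "tilt_bound k j 0 = 1" unfolding tilt S_def by simp
  moreover have "0 \<le> tilt_bound k j (d / 2)"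
    unfolding tilt using S_le_1
    by (auto intro!: add_nonneg_nonneg sum_nonneg mult_nonneg_nonneg simp: atom_weight_def)
  ultimately show ?thesis using \<open>0 < d\<close> d[of "d / 2"] by (intro exI[of _ "d / 2"]) auto
qed

lemma exists_good_cutoff:
  assumes f: "filterlim f at_top sequentially"
    and "0 < j" and "\<And>i. 0 < i \<Longrightarrow> i < j \<Longrightarrow> 1 \<le> k i"
  shows "\<exists>K. good_cutoff f j k K"
proof -
  obtain \<theta> where "0 < \<theta>" and \<rho>: "0 \<le> tilt_bound k j \<theta>" "tilt_bound k j \<theta> < 1"
    using exists_tilt_bound_lt_1[of j k, OF assms(2,3)] by blast
  define c where "c = 1 / (real j + 1) * ((1 / 2) ^ j * (exp (-4) / 3))"
  have "eventually (\<lambda>K. exp \<theta> * tilt_bound k j \<theta> ^ K / (1 - tilt_bound k j \<theta>) \<le> c / real K) sequentially"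
    using \<rho> unfolding c_def by (intro eventually_power_div_le) auto
  moreover have "eventually (\<lambda>K. \<forall>n\<ge>K. 2 + 2 ^ j < f n) sequentially"
    using spec[OF f[unfolded filterlim_at_top_dense], of "2 + 2 ^ j"] by (rule eventually_all_ge_at_top)
  moreover have "eventually (\<lambda>K. k (j - 1) < K) sequentially" by simp
  moreover have "eventually (\<lambda>K. 12 \<le> K) sequentially" by simp
  ultimately have "eventually (good_cutoff f j k) sequentially"
  proof eventually_elim
    case (elim K)
    have "c / real K = 1 / (real j + 1) * ((1 / 2) ^ j / real K * (exp (-4) / 3))"
      unfolding c_def by simp
    with elim \<open>0 < \<theta>\<close> \<rho>(2) show ?case
      unfolding good_cutoff_def by auto
  qed
  then show ?thesis by (auto simp: eventually_sequentially)
qed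

function cutoffs :: "(nat \<Rightarrow> real) \<Rightarrow> nat \<Rightarrow> nat" where
  "cutoffs f j = (if j = 0 then 0 else SOME K. good_cutoff f j (\<lambda>i. if i < j then cutoffs f i else 0) K)"
  by auto
termination by (relation "measure snd") auto

declare cutoffs.simps [simp del]

lemma cutoffs_0: "cutoffs f 0 = 0"
  by (simp add: cutoffs.simps)

lemma good_cutoff_cutoffs:
  assumes "filterlim f at_top sequentially"
  shows "good_cutoff f (Suc j) (cutoffs f) (cutoffs f (Suc j))"
proof (induction j rule: less_induct)
  case (less j)
  let ?k = "\<lambda>i. if i < Suc j then cutoffs f i else 0"
  have "\<exists>K. good_cutoff f (Suc j) ?k K"
  proof (rule exists_good_cutoff[OF assms])
    fix i assume "0 < i" "i < Suc j"
    then obtain i' where "i = Suc i'" "i' < j" by (cases i) auto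
    with less[of i'] show "1 \<le> ?k i" unfolding good_cutoff_def by auto
  qed simp
  then have "good_cutoff f (Suc j) ?k (cutoffs f (Suc j))"
    by (subst cutoffs.simps) (simp add: someI_ex)
  then show ?case
    using good_cutoff_cong[of "Suc j" ?k "cutoffs f"] by simp
qed

context sparse_offspring
begin

lemma exists_size_high_degree_dominant_at_cutoff:
  assumes "good_cutoff f (Suc j) k (k (Suc j))"
  shows "\<exists>n\<in>{k (Suc j)..Suc (k (Suc j) * 2 ^ Suc j)}.
    0 < event_mass distr n (\<lambda>t. k (Suc j) \<le> maxdeg t) \<and>
    event_mass distr n (\<lambda>t. \<not> k (Suc j) \<le> maxdeg t)
      \<le> 1 / (real (Suc j) + 1) * event_mass distr n (\<lambda>t. k (Suc j) \<le> maxdeg t)"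
proof -
  define K where "K = k (Suc j)"
  define eps where "eps = 1 / (real (Suc j) + 1)"
  from assms obtain \<theta> where "12 \<le> K"
    and tilt_lt_1: "tilt_bound k (Suc j) \<theta> < 1"
    and tilt_small: "exp \<theta> * tilt_bound k (Suc j) \<theta> ^ K / (1 - tilt_bound k (Suc j) \<theta>)
      \<le> eps * ((1 / 2) ^ Suc j / real K * (exp (-4) / 3))"
    unfolding good_cutoff_def K_def eps_def by auto
  interpret subcritical_truncation distr K "(1 / 2) ^ j"
    using subcritical_truncation_k \<open>12 \<le> K\<close> unfolding K_def by blast
  define psi where "psi = (\<Sum>d<K. distr d * exp (\<theta> * (real d - 1)))"
  have psi: "0 \<le> psi" "psi \<le> tilt_bound k (Suc j) \<theta>"
    unfolding psi_def K_def by (auto intro!: sum_nonneg tilt_le_tilt_bound simp: distr_nonneg)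
  have distr_K: "distr K = (1 / 2) ^ Suc j / real K"
    unfolding K_def distr_k atom_def atom_weight_def by simp
  show ?thesis
    unfolding K_def[symmetric] eps_def[symmetric]
  proof (rule exists_size_high_degree_dominant[where \<theta>=\<theta>, folded psi_def])
    show "2 * real K / (1 / 2) ^ j \<le> real (K * 2 ^ Suc j)" by (simp add: field_simps)
    show "psi < 1" using psi tilt_lt_1 by simp
    have "exp \<theta> * (psi ^ K / (1 - psi))
        \<le> exp \<theta> * (tilt_bound k (Suc j) \<theta> ^ K / (1 - tilt_bound k (Suc j) \<theta>))"
      using ratio_power_mono[OF psi tilt_lt_1] by (rule mult_left_mono) simp
    with tilt_small show "exp \<theta> * psi ^ K / (1 - psi) \<le> eps * (distr K * (exp (-4) / 3))"
      unfolding distr_K by simp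
    show "0 < distr K" "0 < eps" using \<open>12 \<le> K\<close> unfolding distr_K eps_def by simp_all
  qed
qed

lemma exists_size_conditioned_high_degree:
  assumes f_pos: "\<And>n. 0 < f n"
    and good: "\<And>j. good_cutoff f (Suc j) k (k (Suc j))"
    and "0 < eps"
  shows "\<exists>n\<ge>N. 0 < size_prob distr n \<and> 1 - eps < cond_prob distr n (\<lambda>t. real n / f n < real (maxdeg t))"
proof -
  define j where "j = max N (nat \<lceil>1 / eps\<rceil>)"
  define K where "K = k (Suc j)"
  have "1 / eps < real (Suc j) + 1" unfolding j_def by linarith
  then have eps: "1 / (real (Suc j) + 1) \<le> eps" using \<open>0 < eps\<close> by (simp add: field_simps)
  have "N \<le> Suc j" unfolding j_def by simp
  also have "\<dots> \<le> K" unfolding K_def by (rule strict_mono_imp_increasing[OF strict_mono_k])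
  finally have "N \<le> K" .
  from good[of j] have "12 \<le> K" and f_big: "\<And>n. K \<le> n \<Longrightarrow> 2 + 2 ^ Suc j < f n"
    unfolding good_cutoff_def K_def by auto
  obtain n where n: "K \<le> n" "n \<le> Suc (K * 2 ^ Suc j)"
    and dominant: "0 < event_mass distr n (\<lambda>t. K \<le> maxdeg t)"
      "event_mass distr n (\<lambda>t. \<not> K \<le> maxdeg t)
        \<le> 1 / (real (Suc j) + 1) * event_mass distr n (\<lambda>t. K \<le> maxdeg t)"
    using exists_size_high_degree_dominant_at_cutoff[OF good[of j]] unfolding K_def by auto
  have "real n \<le> real (Suc (K * 2 ^ Suc j))" using n(2) by (simp only: of_nat_le_iff)
  also have "\<dots> < real K * (2 + 2 ^ Suc j)" using \<open>12 \<le> K\<close> by (simp add: algebra_simps)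
  also have "\<dots> < real K * f n" using f_big[OF n(1)] \<open>12 \<le> K\<close> by simp
  finally have "real n / f n < real K" using f_pos[of n] by (simp add: divide_less_eq mult.commute)
  then have "0 < size_prob distr n \<and> 1 - 1 / (real (Suc j) + 1) < cond_prob distr n (\<lambda>t. real n / f n < real (maxdeg t))"
    using dominant by (intro cond_prob_gt_one_minus[where P="\<lambda>t. K \<le> maxdeg t"] distr_nonneg) auto
  then show ?thesis using \<open>N \<le> K\<close> n(1) eps by (intro exI[of _ n]) auto
qed

end

theorem mainTheorem15:
  fixes f :: "nat \<Rightarrow> real"
  assumes "\<And>n. f n > 0"
    and "filterlim f at_top sequentially"
  shows "\<exists>mu. critical mu \<and>
           (\<forall>\<epsilon>>0. \<forall>N. \<exists>n\<ge>N. size_prob mu n > 0 \<and>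
              cond_prob mu n (\<lambda>t. real (maxdeg t) > real n / f n) > 1 - \<epsilon>)"
proof -
  let ?k = "cutoffs f"
  have good: "good_cutoff f (Suc j) ?k (?k (Suc j))" for j
    using good_cutoff_cutoffs[OF assms(2)] .
  then have "strict_mono ?k"
    unfolding good_cutoff_def by (simp add: strict_mono_Suc_iff)
  then interpret sparse_offspring ?k
    using cutoffs_0 by unfold_locales
  show ?thesis
    using critical_distr exists_size_conditioned_high_degree[OF assms(1) good] by blast
qed

end
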